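(* Let $G\in\Phi$. Then for any two distinct vertices $u_1,u_2$ of $G$, $b(G/u_1u_2)\in\{1,3\}$.
   Context: Graphs are finite, undirected, possibly with loops and parallel edges. A graph is non-separable if it is connected, has no cut-vertex, and either has no loops or has exactly one vertex and one edge; a block is a maximal non-separable subgraph; $b(G)$ is the number of blocks of $G$ with at least one edge. $G/u_1u_2$ is obtained by identifying vertices $u_1,u_2$ (edges joining them become loops); $G/e$ is contraction of edge $e$. $\Phi$ is the set of non-separable graphs $G$ with $|V(G)|\ge 2$ such that: (a') $G-e$ is non-separable for every edge $e$; (b') $b(G/e)$ is even for every edge $e$; (c') whenever $G_1,G_2$ are subgraphs of $G$ with $|E(G_1)|,|E(G_2)|\ge 2$, $V(G_1)\cap V(G_2)=\{u_1,u_2\}$ (distinct), $V(G_1)\cup V(G_2)=V(G)$, $E(G_1)\cap E(G_2)=\emptyset$, $E(G_1)\cup E(G_2)=E(G)$, the integers $b(G_1/u_1u_2)$, $b(G_1)-1$, $b(G_2)$ all have the same parity. *)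

theory Defs
  imports Main
begin

text \<open>Finite multigraphs with loops and parallel edges.  Each edge e has a set of
  ends (one vertex for a loop, two vertices otherwise).\<close>

record ('v, 'e) mgraph =
  verts :: "'v set"
  edges :: "'e set"
  ends  :: "'e \<Rightarrow> 'v set"

definition wf_graph :: "('v, 'e) mgraph \<Rightarrow> bool" where
  "wf_graph G \<longleftrightarrow> finite (verts G) \<and> finite (edges G) \<and>
     (\<forall>e\<in>edges G. ends G e \<subseteq> verts G \<and> 1 \<le> card (ends G e) \<and> card (ends G e) \<le> 2)"

definition is_loop :: "('v, 'e) mgraph \<Rightarrow> 'e \<Rightarrow> bool" where
  "is_loop G e \<longleftrightarrow> card (ends G e) = 1"

definition subgraph :: "('v, 'e) mgraph \<Rightarrow> ('v, 'e) mgraph \<Rightarrow> bool" where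
  "subgraph H G \<longleftrightarrow> verts H \<subseteq> verts G \<and> edges H \<subseteq> edges G \<and> ends H = ends G \<and>
     (\<forall>e\<in>edges H. ends G e \<subseteq> verts H)"

definition edge_rel :: "('v, 'e) mgraph \<Rightarrow> ('v \<times> 'v) set" where
  "edge_rel G = {(x, y). \<exists>e\<in>edges G. x \<in> ends G e \<and> y \<in> ends G e}"

definition connected_graph :: "('v, 'e) mgraph \<Rightarrow> bool" where
  "connected_graph G \<longleftrightarrow> verts G \<noteq> {} \<and>
     (\<forall>x\<in>verts G. \<forall>y\<in>verts G. (x, y) \<in> (edge_rel G)\<^sup>*)"

definition delete_vertex :: "('v, 'e) mgraph \<Rightarrow> 'v \<Rightarrow> ('v, 'e) mgraph" where
  "delete_vertex G v = \<lparr>verts = verts G - {v}, edges = {e\<in>edges G. v \<notin> ends G e},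
     ends = ends G\<rparr>"

definition delete_edge :: "('v, 'e) mgraph \<Rightarrow> 'e \<Rightarrow> ('v, 'e) mgraph" where
  "delete_edge G e = \<lparr>verts = verts G, edges = edges G - {e}, ends = ends G\<rparr>"

definition cut_vertex :: "('v, 'e) mgraph \<Rightarrow> 'v \<Rightarrow> bool" where
  "cut_vertex G v \<longleftrightarrow> v \<in> verts G \<and>
     (\<exists>x\<in>verts G - {v}. \<exists>y\<in>verts G - {v}. (x, y) \<in> (edge_rel G)\<^sup>* \<and>
        (x, y) \<notin> (edge_rel (delete_vertex G v))\<^sup>*)"

definition nonseparable :: "('v, 'e) mgraph \<Rightarrow> bool" where
  "nonseparable G \<longleftrightarrow> connected_graph G \<and> (\<forall>v. \<not> cut_vertex G v) \<and>
     ((\<forall>e\<in>edges G. \<not> is_loop G e) \<or> (card (verts G) = 1 \<and> card (edges G) = 1))"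

definition blocks :: "('v, 'e) mgraph \<Rightarrow> ('v, 'e) mgraph set" where
  "blocks G = {H. subgraph H G \<and> nonseparable H \<and>
      (\<forall>H'. subgraph H' G \<and> nonseparable H' \<and> subgraph H H' \<longrightarrow> H' = H)}"

definition nblocks :: "('v, 'e) mgraph \<Rightarrow> nat" where
  "nblocks G = card {H \<in> blocks G. edges H \<noteq> {}}"

text \<open>G/u1u2: identify u2 with u1 (edges joining them become loops).\<close>
definition identify :: "('v, 'e) mgraph \<Rightarrow> 'v \<Rightarrow> 'v \<Rightarrow> ('v, 'e) mgraph" where
  "identify G u1 u2 = \<lparr>verts = verts G - {u2}, edges = edges G,
     ends = (\<lambda>e. (\<lambda>x. if x = u2 then u1 else x) ` ends G e)\<rparr>"

definition contract :: "('v, 'e) mgraph \<Rightarrow> 'e \<Rightarrow> ('v, 'e) mgraph" where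
  "contract G e =
     (if is_loop G e then delete_edge G e
      else (let x = (SOME x. x \<in> ends G e); y = (SOME y. y \<in> ends G e \<and> y \<noteq> x)
            in identify (delete_edge G e) x y))"

definition Phi :: "('v, 'e) mgraph \<Rightarrow> bool" where
  "Phi G \<longleftrightarrow> wf_graph G \<and> nonseparable G \<and> card (verts G) \<ge> 2 \<and>
     (\<forall>e\<in>edges G. nonseparable (delete_edge G e)) \<and>
     (\<forall>e\<in>edges G. even (nblocks (contract G e))) \<and>
     (\<forall>G1 G2 u1 u2. subgraph G1 G \<and> subgraph G2 G \<and>
        card (edges G1) \<ge> 2 \<and> card (edges G2) \<ge> 2 \<and> u1 \<noteq> u2 \<and>
        verts G1 \<inter> verts G2 = {u1, u2} \<and> verts G1 \<union> verts G2 = verts G \<and>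
        edges G1 \<inter> edges G2 = {} \<and> edges G1 \<union> edges G2 = edges G \<longrightarrow>
        (even (int (nblocks (identify G1 u1 u2))) \<longleftrightarrow> even (int (nblocks G1) - 1)) \<and>
        (even (int (nblocks G1) - 1) \<longleftrightarrow> even (int (nblocks G2))))"

end

theory Submission
  imports Defs
begin

text \<open>Let G be non-separable and a \<noteq> b. The components C of G - {a, b} give the
  bridges of {a, b}: C together with its incident edges. Identifying a with b turns
  every bridge into a block C + a and every edge joining a and b into a loop block, and
  there are no other blocks, so b(G/ab) = N, the number of bridges plus the number of
  a-b edges. Connectivity gives N > 0. Any union of at least two of these N pieces is
  non-separable, hence has a single block. If N \<ge> 4, splitting the pieces into two
  groups of at least two violates the parity condition (c'). If N = 2 and there is an
  a-b edge e, then G/e has a single block, contradicting (b'); if N = 2 and there are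
  two bridges, (c') applied to both orders of the split produces a parity contradiction.
  Hence N \<in> {1, 3}.\<close>

section \<open>Walks inside a vertex set\<close>

text \<open>The reflexive transitive closure of edge_rel_on K E A relates the vertices joined by
  a walk in the subgraph of K with edge set E and vertex set A.\<close>
definition edge_rel_on :: "('v,'e) mgraph \<Rightarrow> 'e set \<Rightarrow> 'v set \<Rightarrow> ('v \<times> 'v) set" where
  "edge_rel_on K E A = {(x,y). \<exists>e\<in>E. ends K e \<subseteq> A \<and> x \<in> ends K e \<and> y \<in> ends K e}"

lemma edge_rel_eq_edge_rel_on: "edge_rel K = edge_rel_on K (edges K) UNIV"
  by (auto simp: edge_rel_def edge_rel_on_def)

lemma edge_rel_delete_vertex: "edge_rel (delete_vertex K v) = edge_rel_on K (edges K) (-{v})"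
  by (auto simp: edge_rel_def edge_rel_on_def delete_vertex_def)

lemma edge_rel_on_UNIV: "\<forall>e\<in>E. ends K e \<subseteq> A \<Longrightarrow> edge_rel_on K E UNIV = edge_rel_on K E A"
  by (auto simp: edge_rel_on_def)

lemma rtrancl_edge_rel_on_mono:
  "(x,y) \<in> (edge_rel_on K E A)\<^sup>* \<Longrightarrow> E \<subseteq> E' \<Longrightarrow> A \<subseteq> A' \<Longrightarrow> (x,y) \<in> (edge_rel_on K E' A')\<^sup>*"
  by (rule rtrancl_mono[THEN subsetD]) (auto simp: edge_rel_on_def)

lemma rtrancl_edge_rel_on_sym: "(x,y) \<in> (edge_rel_on K E A)\<^sup>* \<Longrightarrow> (y,x) \<in> (edge_rel_on K E A)\<^sup>*"
proof -
  have "sym (edge_rel_on K E A)" by (auto simp: sym_def edge_rel_on_def)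
  then have "sym ((edge_rel_on K E A)\<^sup>*)" by (rule sym_rtrancl)
  then show "(x,y) \<in> (edge_rel_on K E A)\<^sup>* \<Longrightarrow> (y,x) \<in> (edge_rel_on K E A)\<^sup>*" by (auto simp: sym_def)
qed

lemma rtrancl_edge_rel_on_hub:
  assumes "\<And>x. x \<in> V \<Longrightarrow> (x,t) \<in> (edge_rel_on K E A)\<^sup>*" and "x \<in> V" and "y \<in> V"
  shows "(x,y) \<in> (edge_rel_on K E A)\<^sup>*"
  using assms rtrancl_edge_rel_on_sym by (meson rtrancl_trans)

lemma rtrancl_edge_rel_on_target: "(x,y) \<in> (edge_rel_on K E A)\<^sup>* \<Longrightarrow> x = y \<or> y \<in> A"
  by (induction rule: rtrancl_induct) (auto simp: edge_rel_on_def)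

lemma rtrancl_map:
  "(x,y) \<in> r\<^sup>* \<Longrightarrow> (\<And>p q. (p,q) \<in> r \<Longrightarrow> (f p, f q) \<in> s) \<Longrightarrow> (f x, f y) \<in> s\<^sup>*"
  by (induction rule: rtrancl_induct) (auto intro: rtrancl_into_rtrancl)

lemma rtrancl_into_closed_subrel:
  assumes "(x,y) \<in> r\<^sup>*" and "x \<in> C" and "\<And>u w. (u,w) \<in> r \<Longrightarrow> u \<in> C \<Longrightarrow> w \<in> C \<and> (u,w) \<in> s"
  shows "(x,y) \<in> s\<^sup>* \<and> y \<in> C"
  using assms(1)
proof (induction rule: rtrancl_induct)
  case base then show ?case using assms(2) by simp
next
  case (step y z)
  then show ?case using assms(3)[of y z] by (meson rtrancl.rtrancl_into_rtrancl)
qed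

lemma not_cut_vertexI:
  assumes "\<And>x y. x \<in> verts K - {v} \<Longrightarrow> y \<in> verts K - {v} \<Longrightarrow> (x,y) \<in> (edge_rel_on K (edges K) (-{v}))\<^sup>*"
  shows "\<not> cut_vertex K v"
  using assms by (auto simp: cut_vertex_def edge_rel_delete_vertex)

lemma subgraph_antisym: "subgraph A B \<Longrightarrow> subgraph B A \<Longrightarrow> A = (B::('v,'e) mgraph)"
  unfolding subgraph_def by (intro mgraph.equality) auto

text \<open>subgraph K K says that every edge of K has its ends in K.\<close>
lemma nblocks_nonseparable:
  assumes "nonseparable K" and "edges K \<noteq> {}" and "subgraph K K"
  shows "nblocks K = 1"
proof -
  have "blocks K = {K}"
    using assms(1,3) subgraph_antisym unfolding blocks_def by blast
  then have "{H \<in> blocks K. edges H \<noteq> {}} = {K}" using assms(2) by auto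
  then show ?thesis by (simp add: nblocks_def)
qed

section \<open>Bridges of a pair of vertices\<close>

definition bridge_comp :: "('v,'e) mgraph \<Rightarrow> 'v \<Rightarrow> 'v \<Rightarrow> 'v \<Rightarrow> 'v set" where
  "bridge_comp G a b x = {y. (x,y) \<in> (edge_rel_on G (edges G) (verts G - {a,b}))\<^sup>*}"

definition bridge_comps :: "('v,'e) mgraph \<Rightarrow> 'v \<Rightarrow> 'v \<Rightarrow> 'v set set" where
  "bridge_comps G a b = bridge_comp G a b ` (verts G - {a,b})"

definition incident_edges :: "('v,'e) mgraph \<Rightarrow> 'v set \<Rightarrow> 'e set" where
  "incident_edges G C = {e \<in> edges G. ends G e \<inter> C \<noteq> {}}"

definition joining_edges :: "('v,'e) mgraph \<Rightarrow> 'v \<Rightarrow> 'v \<Rightarrow> 'e set" where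
  "joining_edges G a b = {e \<in> edges G. ends G e = {a,b}}"

text \<open>The images in G/ab of a bridge with component C and of an a-b edge e.\<close>
definition bridge_block :: "('v,'e) mgraph \<Rightarrow> 'v \<Rightarrow> 'v \<Rightarrow> 'v set \<Rightarrow> ('v,'e) mgraph" where
  "bridge_block G a b C =
     \<lparr>verts = insert a C, edges = incident_edges G C, ends = ends (identify G a b)\<rparr>"

definition loop_block :: "('v,'e) mgraph \<Rightarrow> 'v \<Rightarrow> 'v \<Rightarrow> 'e \<Rightarrow> ('v,'e) mgraph" where
  "loop_block G a b e = \<lparr>verts = {a}, edges = {e}, ends = ends (identify G a b)\<rparr>"

definition bridge_union :: "('v,'e) mgraph \<Rightarrow> 'v \<Rightarrow> 'v \<Rightarrow> 'v set set \<Rightarrow> 'e set \<Rightarrow> ('v,'e) mgraph" where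
  "bridge_union G a b X F =
     \<lparr>verts = {a,b} \<union> \<Union>X, edges = F \<union> \<Union>(incident_edges G ` X), ends = ends G\<rparr>"

lemma bridge_comps_swap: "bridge_comps G b a = bridge_comps G a b"
  unfolding bridge_comps_def bridge_comp_def by (simp add: insert_commute)

lemma joining_edges_swap: "joining_edges G b a = joining_edges G a b"
  unfolding joining_edges_def by (simp add: insert_commute)

locale nonsep_pair =
  fixes G :: "('v,'e) mgraph" and a b :: 'v
  assumes wf: "wf_graph G" and ns: "nonseparable G"
    and av: "a \<in> verts G" and bv: "b \<in> verts G" and ab: "a \<noteq> b"
begin

abbreviation "R \<equiv> verts G - {a,b}"
abbreviation "comps \<equiv> bridge_comps G a b"

lemma finite_verts: "finite (verts G)" using wf by (simp add: wf_graph_def)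
lemma finite_edges: "finite (edges G)" using wf by (simp add: wf_graph_def)
lemma ends_subset: "e \<in> edges G \<Longrightarrow> ends G e \<subseteq> verts G" using wf by (simp add: wf_graph_def)

lemma card_ends: "e \<in> edges G \<Longrightarrow> card (ends G e) = 2"
proof -
  assume e: "e \<in> edges G"
  have c2: "card (verts G) \<ge> 2"
  proof -
    have "{a,b} \<subseteq> verts G" using av bv by auto
    then have "card {a,b} \<le> card (verts G)" by (rule card_mono[OF finite_verts])
    then show ?thesis using ab by simp
  qed
  have "\<not> is_loop G e" using ns c2 e unfolding nonseparable_def by auto
  moreover have "1 \<le> card (ends G e) \<and> card (ends G e) \<le> 2" using wf e unfolding wf_graph_def
    by blast
  ultimately show ?thesis unfolding is_loop_def by linarith
qed

lemma ends_doubleton: "e \<in> edges G \<Longrightarrow> \<exists>p q. p \<noteq> q \<and> ends G e = {p,q}"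
  using card_ends[unfolded card_2_iff] by blast

lemma ends_eq_pair: "e \<in> edges G \<Longrightarrow> x \<in> ends G e \<Longrightarrow> y \<in> ends G e \<Longrightarrow> x \<noteq> y \<Longrightarrow> ends G e = {x,y}"
  using ends_doubleton by fastforce

lemma ends_nonempty: "e \<in> edges G \<Longrightarrow> ends G e \<noteq> {}"
  using card_ends by fastforce

lemma connected_rtrancl: "x \<in> verts G \<Longrightarrow> y \<in> verts G \<Longrightarrow> (x,y) \<in> (edge_rel_on G (edges G) UNIV)\<^sup>*"
  using ns by (auto simp: nonseparable_def connected_graph_def edge_rel_eq_edge_rel_on)

lemma connected_delete_vertex: assumes "x \<in> verts G - {v}" "y \<in> verts G - {v}"
  shows "(x,y) \<in> (edge_rel_on G (edges G) (-{v}))\<^sup>*"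
proof (cases "v \<in> verts G")
  case True
  have "\<not> cut_vertex G v" using ns by (simp add: nonseparable_def)
  have "(x,y) \<in> (edge_rel G)\<^sup>*" using connected_rtrancl assms by (simp add: edge_rel_eq_edge_rel_on)
  then have "(x,y) \<in> (edge_rel (delete_vertex G v))\<^sup>*"
    using \<open>\<not> cut_vertex G v\<close> True assms unfolding cut_vertex_def by blast
  then show ?thesis by (simp add: edge_rel_delete_vertex)
next
  case False
  then have "edge_rel_on G (edges G) UNIV = edge_rel_on G (edges G) (-{v})"
    using ends_subset by (intro edge_rel_on_UNIV) blast
  then show ?thesis using connected_rtrancl assms by auto
qed

lemma rtrancl_edge_rel_on_exit:
  assumes "(x,y) \<in> (edge_rel_on G (edges G) A)\<^sup>*" "x \<in> C" "y \<notin> C"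
  shows "\<exists>x' z e. (x,x') \<in> (edge_rel_on G (edges G) (A \<inter> C))\<^sup>* \<and> x' \<in> C \<and> z \<notin> C \<and> e \<in> edges G \<and>
          ends G e \<subseteq> A \<and> x' \<in> ends G e \<and> z \<in> ends G e"
  using assms
proof (induction rule: converse_rtrancl_induct)
  case base then show ?case by simp
next
  case (step x x1)
  from step.hyps(1) obtain e1
    where e1: "e1 \<in> edges G" "ends G e1 \<subseteq> A" "x \<in> ends G e1" "x1 \<in> ends G e1"
    by (auto simp: edge_rel_on_def)
  show ?case
  proof (cases "x1 \<in> C")
    case False
    show ?thesis using e1 step.prems False by fast
  next
    case True
    then obtain x' z e
      where IH: "(x1,x') \<in> (edge_rel_on G (edges G) (A \<inter> C))\<^sup>*" "x' \<in> C" "z \<notin> C" "e \<in> edges G"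
          "ends G e \<subseteq> A" "x' \<in> ends G e" "z \<in> ends G e" using step.IH step.prems by blast
    have "(x,x1) \<in> (edge_rel_on G (edges G) (A \<inter> C))\<^sup>*"
    proof (cases "x = x1")
      case False
      then have "ends G e1 = {x,x1}" using ends_eq_pair e1 by blast
      then have "ends G e1 \<subseteq> A \<inter> C" using e1 True step.prems by auto
      then have "(x,x1) \<in> edge_rel_on G (edges G) (A \<inter> C)" unfolding edge_rel_on_def using e1(1,3,4)
        by blast
      then show ?thesis by blast
    qed simp
    then have "(x,x') \<in> (edge_rel_on G (edges G) (A \<inter> C))\<^sup>*" using IH(1) by (rule rtrancl_trans)
    then show ?thesis using IH(2-7) by fast
  qed
qed

lemma bridge_comp_subset: "bridge_comp G a b x \<subseteq> insert x R"
  unfolding bridge_comp_def using rtrancl_edge_rel_on_target by fastforce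

lemma bridge_comp_self: "x \<in> bridge_comp G a b x" by (simp add: bridge_comp_def)

lemma bridge_comp_trans:
  "y \<in> bridge_comp G a b x \<Longrightarrow> z \<in> bridge_comp G a b y \<Longrightarrow> z \<in> bridge_comp G a b x"
  unfolding bridge_comp_def using rtrancl_trans[of x y _ z] by simp

lemma bridge_comp_sym: "y \<in> bridge_comp G a b x \<Longrightarrow> x \<in> bridge_comp G a b y"
  unfolding bridge_comp_def using rtrancl_edge_rel_on_sym by fast

lemma bridge_comp_eq: "y \<in> bridge_comp G a b x \<Longrightarrow> bridge_comp G a b y = bridge_comp G a b x"
  using bridge_comp_trans bridge_comp_sym by blast

lemma bridge_comp_step:
  "y \<in> bridge_comp G a b x \<Longrightarrow> (y,z) \<in> edge_rel_on G (edges G) R \<Longrightarrow> z \<in> bridge_comp G a b x"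
  unfolding bridge_comp_def using rtrancl.rtrancl_into_rtrancl[of x y _ z] by simp

lemma comps_subset_rest: "C \<in> comps \<Longrightarrow> C \<subseteq> R"
  unfolding bridge_comps_def using bridge_comp_subset by blast

lemma comps_nonempty: "C \<in> comps \<Longrightarrow> C \<noteq> {}"
  unfolding bridge_comps_def using bridge_comp_self by blast

lemma comps_eq_bridge_comp: "C \<in> comps \<Longrightarrow> x \<in> C \<Longrightarrow> C = bridge_comp G a b x"
  unfolding bridge_comps_def using bridge_comp_eq by blast

lemma comps_disjoint: "C \<in> comps \<Longrightarrow> C' \<in> comps \<Longrightarrow> x \<in> C \<Longrightarrow> x \<in> C' \<Longrightarrow> C = C'"
  using comps_eq_bridge_comp by metis

lemma Union_comps: "\<Union>comps = R"
proof
  show "\<Union>comps \<subseteq> R" using comps_subset_rest by blast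
  show "R \<subseteq> \<Union>comps" unfolding bridge_comps_def using bridge_comp_self by blast
qed

lemma finite_comps: "finite comps" unfolding bridge_comps_def using finite_verts by simp

lemma comps_avoid_ends: "C \<in> comps \<Longrightarrow> a \<notin> C \<and> b \<notin> C"
  using comps_subset_rest by auto

lemma comps_adjacent_closed:
  "C \<in> comps \<Longrightarrow> p \<in> C \<Longrightarrow> e \<in> edges G \<Longrightarrow> p \<in> ends G e \<Longrightarrow> q \<in> ends G e \<Longrightarrow>
    q \<in> R \<Longrightarrow> q \<in> C"
proof -
  assume h: "C \<in> comps" "p \<in> C" "e \<in> edges G" "p \<in> ends G e" "q \<in> ends G e" "q \<in> R"
  show "q \<in> C"
  proof (cases "p = q")
    case False
    then have "ends G e = {p,q}" using ends_eq_pair h by blast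
    moreover have "p \<in> R" using h comps_subset_rest by blast
    ultimately have "ends G e \<subseteq> R" using h by simp
    then have "(p,q) \<in> edge_rel_on G (edges G) R" unfolding edge_rel_on_def using h(3,4,5) by blast
    moreover have "C = bridge_comp G a b p" using h comps_eq_bridge_comp by blast
    ultimately show ?thesis using bridge_comp_step bridge_comp_self by blast
  qed (use h in simp)
qed

lemma incident_edges_ends: "C \<in> comps \<Longrightarrow> e \<in> incident_edges G C \<Longrightarrow> ends G e \<subseteq> insert a (insert b C)"
proof
  fix q assume h: "C \<in> comps" "e \<in> incident_edges G C" "q \<in> ends G e"
  then obtain p where p: "p \<in> C" "p \<in> ends G e" "e \<in> edges G" unfolding incident_edges_def by blast
  have "q \<in> verts G" using ends_subset h p by blast
  then show "q \<in> insert a (insert b C)" using comps_adjacent_closed[OF h(1) p(1) p(3) p(2) h(3)]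
    by auto
qed

lemma incident_edges_disjoint:
  "C \<in> comps \<Longrightarrow> C' \<in> comps \<Longrightarrow> C \<noteq> C' \<Longrightarrow> incident_edges G C \<inter> incident_edges G C' = {}"
proof (rule ccontr)
  assume h: "C \<in> comps" "C' \<in> comps" "C \<noteq> C'" "incident_edges G C \<inter> incident_edges G C' \<noteq> {}"
  then obtain e where e: "e \<in> incident_edges G C" "e \<in> incident_edges G C'" by blast
  then obtain p where p: "p \<in> C" "p \<in> ends G e" unfolding incident_edges_def by blast
  have "p \<in> insert a (insert b C')" using incident_edges_ends[OF h(2) e(2)] p by blast
  moreover have "p \<noteq> a" "p \<noteq> b" using comps_avoid_ends h(1) p by auto
  ultimately have "p \<in> C'" by blast
  then show False using comps_disjoint h p by blast
qed

lemma incident_joining_disjoint: "C \<in> comps \<Longrightarrow> incident_edges G C \<inter> joining_edges G a b = {}"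
  unfolding incident_edges_def joining_edges_def using comps_avoid_ends by fastforce

lemma edges_decomp: "edges G = joining_edges G a b \<union> \<Union>(incident_edges G ` comps)"
proof
  show "joining_edges G a b \<union> \<Union>(incident_edges G ` comps) \<subseteq> edges G"
    by (auto simp: joining_edges_def incident_edges_def)
  show "edges G \<subseteq> joining_edges G a b \<union> \<Union>(incident_edges G ` comps)"
  proof
    fix e assume e: "e \<in> edges G"
    show "e \<in> joining_edges G a b \<union> \<Union>(incident_edges G ` comps)"
    proof (cases "ends G e \<inter> R = {}")
      case True
      then have "ends G e \<subseteq> {a,b}" using ends_subset[OF e] by auto
      moreover have "card (ends G e) = 2" using card_ends e by blast
      ultimately have "ends G e = {a,b}"
        using card_subset_eq[of "{a,b}" "ends G e"] ab by simp
      then show ?thesis using e by (simp add: joining_edges_def)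
    next
      case False
      then obtain p where p: "p \<in> ends G e" "p \<in> R" by blast
      then have "bridge_comp G a b p \<in> comps" by (simp add: bridge_comps_def)
      moreover have "e \<in> incident_edges G (bridge_comp G a b p)" using e p bridge_comp_self
        unfolding incident_edges_def by blast
      ultimately show ?thesis by blast
    qed
  qed
qed

lemma verts_decomp: "verts G = {a,b} \<union> \<Union>comps"
  using Union_comps av bv by auto

lemma edge_rel_on_comp_incident:
  "C \<in> comps \<Longrightarrow> B \<inter> C \<subseteq> B' \<Longrightarrow>
    edge_rel_on G (edges G) (B \<inter> C) \<subseteq> edge_rel_on G (incident_edges G C) B'"
  unfolding edge_rel_on_def incident_edges_def using ends_nonempty by fastforce

text \<open>A walk in G - v from x to an end vertex other than v leaves C for the first time
  along an edge into a or b.\<close>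
lemma comps_reach_attachment:
  assumes C: "C \<in> comps" and x: "x \<in> C" and v: "v \<noteq> x"
  shows "\<exists>s. s \<in> {a,b} \<and> s \<noteq> v \<and>
    (x,s) \<in> (edge_rel_on G (incident_edges G C) (insert a (insert b C) - {v}))\<^sup>*"
proof -
  define s0 where "s0 = (if v = a then b else a)"
  have s0: "s0 \<in> verts G" "s0 \<noteq> v" "s0 \<notin> C" using av bv ab comps_avoid_ends[OF C]
    by (auto simp: s0_def)
  have xv: "x \<in> verts G" using x comps_subset_rest[OF C] by blast
  have "(x,s0) \<in> (edge_rel_on G (edges G) (-{v}))\<^sup>*" using s0 xv v
    by (intro connected_delete_vertex) auto
  from rtrancl_edge_rel_on_exit[OF this x s0(3)] obtain x' z e where
    E: "(x,x') \<in> (edge_rel_on G (edges G) (-{v} \<inter> C))\<^sup>*" "x' \<in> C" "z \<notin> C" "e \<in> edges G"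
       "ends G e \<subseteq> -{v}" "x' \<in> ends G e" "z \<in> ends G e" by blast
  have zv: "z \<in> verts G" using ends_subset E by blast
  have zS: "z \<in> {a,b}"
  proof (rule ccontr)
    assume "z \<notin> {a,b}"
    then have "z \<in> R" using zv by simp
    then have "z \<in> C" using comps_adjacent_closed[OF C E(2) E(4) E(6) E(7)] by blast
    then show False using E by blast
  qed
  have zneq: "z \<noteq> v" using E by blast
  let ?B = "insert a (insert b C) - {v}"
  have "-{v} \<inter> C \<subseteq> ?B" by blast
  then have "edge_rel_on G (edges G) (-{v} \<inter> C) \<subseteq> edge_rel_on G (incident_edges G C) ?B"
    by (rule edge_rel_on_comp_incident[OF C])
  then have "(x,x') \<in> (edge_rel_on G (incident_edges G C) ?B)\<^sup>*" using subsetD[OF rtrancl_mono E(1)]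
    by blast
  moreover have "e \<in> incident_edges G C" using E unfolding incident_edges_def by blast
  moreover have "ends G e \<subseteq> ?B" using incident_edges_ends[OF C \<open>e \<in> incident_edges G C\<close>] E(5)
    by blast
  moreover have "(x',z) \<in> edge_rel_on G (incident_edges G C) ?B"
    using \<open>e \<in> incident_edges G C\<close> \<open>ends G e \<subseteq> ?B\<close> E(6,7) unfolding edge_rel_on_def by blast
  ultimately have "(x,z) \<in> (edge_rel_on G (incident_edges G C) ?B)\<^sup>*"
    by (meson rtrancl.rtrancl_into_rtrancl)
  then show ?thesis using zS zneq by blast
qed

lemma comps_attached:
  assumes C: "C \<in> comps" and s: "s \<in> {a,b}"
  shows "\<exists>e\<in>incident_edges G C. s \<in> ends G e"
proof -
  obtain x where x: "x \<in> C" using comps_nonempty[OF C] by blast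
  define v where "v = (if s = a then b else a)"
  have "v \<noteq> x" using comps_avoid_ends[OF C] x by (auto simp: v_def)
  from comps_reach_attachment[OF C x this] obtain t where t: "t \<in> {a,b}" "t \<noteq> v"
    "(x,t) \<in> (edge_rel_on G (incident_edges G C) (insert a (insert b C) - {v}))\<^sup>*" by blast
  have "t = s" using t s ab by (auto simp: v_def)
  have "x \<noteq> t" using x t comps_avoid_ends[OF C] by blast
  then obtain y where "(y,t) \<in> edge_rel_on G (incident_edges G C) (insert a (insert b C) - {v})"
    using t(3) by (metis rtranclE)
  then show ?thesis using \<open>t = s\<close> unfolding edge_rel_on_def by blast
qed

lemma card_incident_edges: "C \<in> comps \<Longrightarrow> card (incident_edges G C) \<ge> 2"
proof -
  assume C: "C \<in> comps"
  obtain e1 where e1: "e1 \<in> incident_edges G C" "a \<in> ends G e1" using comps_attached[OF C] by blast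
  obtain e2 where e2: "e2 \<in> incident_edges G C" "b \<in> ends G e2" using comps_attached[OF C] by blast
  have "e1 \<noteq> e2"
  proof
    assume "e1 = e2"
    obtain p where "p \<in> C" "p \<in> ends G e1" using e1 unfolding incident_edges_def by blast
    then have "ends G e1 = {a,p}" using ends_eq_pair e1 comps_avoid_ends[OF C]
      unfolding incident_edges_def by blast
    then show False using e2 \<open>e1 = e2\<close> ab comps_avoid_ends[OF C] \<open>p \<in> C\<close> by auto
  qed
  moreover have "finite (incident_edges G C)" using finite_edges unfolding incident_edges_def
    by simp
  ultimately have "card {e1,e2} \<le> card (incident_edges G C)" using e1 e2 by (intro card_mono) auto
  then show ?thesis using \<open>e1 \<noteq> e2\<close> by simp
qed


section \<open>Blocks of the identified graph\<close>

abbreviation "H \<equiv> identify G a b"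
abbreviation "merge \<equiv> (\<lambda>x. if x = b then a else x)"

lemma ends_identify: "ends H e = merge ` ends G e" by (simp add: identify_def)

lemma edge_rel_on_bridge_block: "edge_rel_on (bridge_block G a b C) E A = edge_rel_on H E A"
  by (simp add: bridge_block_def edge_rel_on_def)

lemma bridge_block_reach:
  assumes C: "C \<in> comps" and v: "v \<noteq> a" and x: "x \<in> C" "x \<noteq> v"
  shows "(x,a) \<in> (edge_rel_on H (incident_edges G C) (-{v}))\<^sup>*"
proof -
  from comps_reach_attachment[OF C x(1)] x(2) obtain s where s: "s \<in> {a,b}" "s \<noteq> v"
     "(x,s) \<in> (edge_rel_on G (incident_edges G C) (insert a (insert b C) - {v}))\<^sup>*" by metis
  have "(merge x, merge s) \<in> (edge_rel_on H (incident_edges G C) (-{v}))\<^sup>*"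
  proof (rule rtrancl_map[OF s(3)])
    fix p q assume "(p,q) \<in> edge_rel_on G (incident_edges G C) (insert a (insert b C) - {v})"
    then obtain e where e: "e \<in> incident_edges G C" "ends G e \<subseteq> insert a (insert b C) - {v}"
      "p \<in> ends G e" "q \<in> ends G e"
      unfolding edge_rel_on_def by blast
    have "ends H e \<subseteq> -{v}" using e(2) v unfolding ends_identify by auto
    moreover have "merge p \<in> ends H e" "merge q \<in> ends H e" using e(3,4) unfolding ends_identify
      by auto
    ultimately show "(merge p, merge q) \<in> edge_rel_on H (incident_edges G C) (-{v})"
      unfolding edge_rel_on_def using e(1) by blast
  qed
  moreover have "merge x = x" using x comps_avoid_ends[OF C] by auto
  moreover have "merge s = a" using s by auto
  ultimately show ?thesis by simp
qed

lemma card_ends_bridge_block: "C \<in> comps \<Longrightarrow> e \<in> incident_edges G C \<Longrightarrow> card (ends H e) = 2"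
proof -
  assume C: "C \<in> comps" and e: "e \<in> incident_edges G C"
  then obtain p where p: "p \<in> C" "p \<in> ends G e" "e \<in> edges G" unfolding incident_edges_def by blast
  obtain p' q' where pq: "p' \<noteq> q'" "ends G e = {p',q'}" using ends_doubleton[OF p(3)] by blast
  then have "\<exists>q. q \<noteq> p \<and> ends G e = {p,q}" using p(2) by auto
  then obtain q where q: "q \<noteq> p" "ends G e = {p,q}" by blast
  have "merge p = p" using p comps_avoid_ends[OF C] by auto
  moreover have "merge q \<noteq> p" using q p comps_avoid_ends[OF C] by auto
  ultimately have ne: "merge p \<noteq> merge q" by simp
  have E: "ends H e = {merge p, merge q}"
    by (simp only: ends_identify q(2) image_insert image_empty)
  show ?thesis unfolding E using ne by simp
qed

lemma bridge_comp_connected_in_block: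
  assumes C: "C \<in> comps" and xy: "x \<in> C" "y \<in> C"
  shows "(x,y) \<in> (edge_rel_on H (incident_edges G C) (-{a}))\<^sup>*"
proof -
  have "y \<in> bridge_comp G a b x" using comps_eq_bridge_comp[OF C] xy by blast
  then have walk: "(x,y) \<in> (edge_rel_on G (edges G) R)\<^sup>*" by (simp add: bridge_comp_def)
  have step: "w \<in> C \<and> (u,w) \<in> edge_rel_on H (incident_edges G C) (-{a})"
    if uw: "(u,w) \<in> edge_rel_on G (edges G) R" "u \<in> C" for u w
  proof -
    obtain e where e: "e \<in> edges G" "ends G e \<subseteq> R" "u \<in> ends G e" "w \<in> ends G e"
      using uw(1) unfolding edge_rel_on_def by blast
    have "w \<in> C" using comps_adjacent_closed[OF C uw(2) e(1) e(3) e(4)] e by blast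
    moreover have "e \<in> incident_edges G C" using e uw unfolding incident_edges_def by blast
    moreover have "ends H e = ends G e" unfolding ends_identify using e(2) by auto
    ultimately show ?thesis using e unfolding edge_rel_on_def by auto
  qed
  show ?thesis using rtrancl_into_closed_subrel[OF walk xy(1) step] by simp
qed

lemma nonseparable_bridge_block: assumes C: "C \<in> comps" shows "nonseparable (bridge_block G a b C)"
proof -
  have vQ: "verts (bridge_block G a b C) = insert a C"
    and eQ: "edges (bridge_block G a b C) = incident_edges G C"
    and enQ: "ends (bridge_block G a b C) = ends H" by (simp_all add: bridge_block_def)
  have to_a: "(x,a) \<in> (edge_rel_on H (incident_edges G C) (-{v}))\<^sup>*"
    if "x \<in> insert a C - {v}" "v \<noteq> a" for x v
    using that bridge_block_reach[OF C] by (cases "x = a") auto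
  have "(x,a) \<in> (edge_rel_on H (incident_edges G C) UNIV)\<^sup>*" if "x \<in> insert a C" for x
  proof -
    have "x \<in> insert a C - {b}" using that ab comps_avoid_ends[OF C] by auto
    then show ?thesis using to_a[of x b] ab by (auto elim: rtrancl_edge_rel_on_mono)
  qed
  then have "(x,y) \<in> (edge_rel_on H (incident_edges G C) UNIV)\<^sup>*"
    if "x \<in> insert a C" "y \<in> insert a C" for x y
    using that by (rule rtrancl_edge_rel_on_hub)
  then have con: "connected_graph (bridge_block G a b C)"
    unfolding connected_graph_def edge_rel_eq_edge_rel_on vQ eQ edge_rel_on_bridge_block by simp
  have ncut: "\<not> cut_vertex (bridge_block G a b C) v" for v
  proof (rule not_cut_vertexI, unfold vQ eQ edge_rel_on_bridge_block)
    fix x y assume xy: "x \<in> insert a C - {v}" "y \<in> insert a C - {v}"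
    show "(x,y) \<in> (edge_rel_on H (incident_edges G C) (-{v}))\<^sup>*"
    proof (cases "v = a")
      case True
      then show ?thesis using bridge_comp_connected_in_block[OF C] xy by blast
    next
      case False
      then show ?thesis using rtrancl_edge_rel_on_hub[OF to_a xy] by blast
    qed
  qed
  have nl: "\<forall>e\<in>edges (bridge_block G a b C). \<not> is_loop (bridge_block G a b C) e"
    unfolding eQ is_loop_def enQ using card_ends_bridge_block[OF C] by simp
  show ?thesis unfolding nonseparable_def using con ncut nl by blast
qed

lemma subgraph_identifyD:
  assumes "subgraph K H"
  shows "verts K \<subseteq> verts G - {b}" "edges K \<subseteq> edges G" "ends K = ends H"
    "\<forall>e\<in>edges K. ends H e \<subseteq> verts K"
  using assms unfolding subgraph_def by (simp_all add: identify_def)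

lemma ends_identify_nonempty: "e \<in> edges G \<Longrightarrow> ends H e \<noteq> {}"
  unfolding ends_identify using ends_nonempty by blast

lemma finite_ends_identify: "e \<in> edges G \<Longrightarrow> finite (ends H e)"
  unfolding ends_identify using card_ends by (metis card.infinite finite_imageI zero_neq_numeral)

lemma nonloop_other_end: "e \<in> edges G \<Longrightarrow> card (ends H e) \<noteq> 1 \<Longrightarrow> \<exists>y\<in>ends H e. y \<noteq> a"
proof (rule ccontr)
  assume h: "e \<in> edges G" "card (ends H e) \<noteq> 1" "\<not> (\<exists>y\<in>ends H e. y \<noteq> a)"
  then have "ends H e \<subseteq> {a}" by (simp only: subset_eq Ball_def) blast
  then have "ends H e = {a}" using ends_identify_nonempty[OF h(1)]
    by (simp only: subset_singleton_iff) blast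
  then show False using h(2) by simp
qed

lemma nonseparable_loop_free:
  assumes K: "subgraph K H" "nonseparable K" and e: "e \<in> edges K" "\<not> is_loop K e"
  shows "\<forall>e'\<in>edges K. \<not> is_loop K e'"
proof (rule ccontr)
  assume "\<not> (\<forall>e'\<in>edges K. \<not> is_loop K e')"
  then have c1: "card (verts K) = 1" using K(2) unfolding nonseparable_def by blast
  have S: "verts K \<subseteq> verts G - {b}" "edges K \<subseteq> edges G" "ends K = ends H" "ends H e \<subseteq> verts K"
    using subgraph_identifyD[OF K(1)] e by auto
  have fK: "finite (verts K)" using S(1) finite_verts finite_subset by blast
  have eG: "e \<in> edges G" using S e by blast
  have "card (ends H e) \<noteq> 1" using e(2) S(3) unfolding is_loop_def by simp
  moreover have "card (ends H e) \<noteq> 0"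
    using ends_identify_nonempty[OF eG] finite_ends_identify[OF eG] by simp
  moreover have "card (ends H e) \<le> 1" using card_mono[OF fK S(4)] c1 by simp
  ultimately show False by linarith
qed

lemma edge_rel_on_subgraph_identify_avoiding:
  assumes "subgraph K H"
  shows "edge_rel_on K (edges K) (-{a}) \<subseteq> edge_rel_on G (edges G) R"
proof
  fix p assume "p \<in> edge_rel_on K (edges K) (-{a})"
  then obtain x y e
    where e: "p = (x,y)" "e \<in> edges K" "ends H e \<subseteq> -{a}" "x \<in> ends H e" "y \<in> ends H e"
    using subgraph_identifyD[OF assms] unfolding edge_rel_on_def by auto
  have eG: "e \<in> edges G" using e subgraph_identifyD[OF assms] by blast
  have "a \<notin> ends G e" "b \<notin> ends G e" using e(3) unfolding ends_identify by auto
  then have "ends H e = ends G e" "ends G e \<subseteq> R"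
    using ends_subset[OF eG] unfolding ends_identify by auto
  then show "p \<in> edge_rel_on G (edges G) R" unfolding edge_rel_on_def using e eG by auto
qed

text \<open>K - a is connected and, away from a, walks in G/ab are walks in G - {a, b}.\<close>
lemma nonseparable_subgraph_identify_verts:
  assumes C: "C \<in> comps" and K: "subgraph K H" "nonseparable K" and c: "c \<in> C" "c \<in> verts K"
  shows "verts K \<subseteq> insert a C"
proof
  fix z assume z: "z \<in> verts K"
  show "z \<in> insert a C"
  proof (rule ccontr)
    assume nz: "z \<notin> insert a C"
    have ca: "c \<noteq> a" using c comps_avoid_ends[OF C] by blast
    have "(c,z) \<in> (edge_rel K)\<^sup>*" using K(2) c z unfolding nonseparable_def connected_graph_def
      by blast
    have "(c,z) \<in> (edge_rel_on K (edges K) (-{a}))\<^sup>*"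
    proof (cases "a \<in> verts K")
      case True
      have "\<not> cut_vertex K a" using K(2) unfolding nonseparable_def by blast
      then have "(c,z) \<in> (edge_rel (delete_vertex K a))\<^sup>*"
        using True c z ca nz \<open>(c,z) \<in> (edge_rel K)\<^sup>*\<close> unfolding cut_vertex_def by blast
      then show ?thesis by (simp add: edge_rel_delete_vertex)
    next
      case False
      then have "edge_rel_on K (edges K) UNIV = edge_rel_on K (edges K) (-{a})"
        using subgraph_identifyD[OF K(1)] by (intro edge_rel_on_UNIV) auto
      then show ?thesis using \<open>(c,z) \<in> (edge_rel K)\<^sup>*\<close> by (simp add: edge_rel_eq_edge_rel_on)
    qed
    then have "(c,z) \<in> (edge_rel_on G (edges G) R)\<^sup>*"
      using rtrancl_mono[OF edge_rel_on_subgraph_identify_avoiding[OF K(1)]] by blast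
    then have "z \<in> C" using comps_eq_bridge_comp[OF C c(1)] by (simp add: bridge_comp_def)
    then show False using nz by blast
  qed
qed

lemma subgraph_bridge_block:
  assumes C: "C \<in> comps" and K: "subgraph K H" "nonseparable K" "\<forall>e\<in>edges K. \<not> is_loop K e"
    and c: "c \<in> C" "c \<in> verts K"
  shows "subgraph K (bridge_block G a b C)"
proof -
  note S = subgraph_identifyD[OF K(1)]
  have VK: "verts K \<subseteq> insert a C" by (rule nonseparable_subgraph_identify_verts[OF C K(1,2) c])
  have EK: "edges K \<subseteq> incident_edges G C"
  proof
    fix e assume e: "e \<in> edges K"
    have eG: "e \<in> edges G" using e S by blast
    have "card (ends H e) \<noteq> 1" using K(3) e S(3) unfolding is_loop_def by simp
    then obtain y where y: "y \<in> ends H e" "y \<noteq> a" using nonloop_other_end[OF eG] by blast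
    have "y \<in> C" using y VK S(4) e by blast
    obtain p where p: "p \<in> ends G e" "y = merge p" using y(1) unfolding ends_identify by blast
    then have "p \<in> C" using \<open>y \<in> C\<close> y(2) by (auto split: if_splits)
    then show "e \<in> incident_edges G C" unfolding incident_edges_def using eG p by blast
  qed
  show ?thesis unfolding subgraph_def using VK EK S by (simp add: bridge_block_def)
qed

lemma bridge_block_subgraph: assumes C: "C \<in> comps" shows "subgraph (bridge_block G a b C) H"
proof -
  have "insert a C \<subseteq> verts G - {b}"
    using av ab comps_subset_rest[OF C] comps_avoid_ends[OF C] by auto
  moreover have "incident_edges G C \<subseteq> edges G" by (auto simp: incident_edges_def)
  moreover have "\<forall>e\<in>incident_edges G C. ends H e \<subseteq> insert a C"
  proof
    fix e assume "e \<in> incident_edges G C"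
    then have "ends G e \<subseteq> insert a (insert b C)" by (rule incident_edges_ends[OF C])
    then show "ends H e \<subseteq> insert a C" unfolding ends_identify by auto
  qed
  ultimately show ?thesis unfolding subgraph_def by (simp add: bridge_block_def identify_def)
qed

lemma incident_edges_nonempty: "C \<in> comps \<Longrightarrow> incident_edges G C \<noteq> {}"
  using card_incident_edges by fastforce

lemma bridge_block_in_blocks: assumes C: "C \<in> comps" shows "bridge_block G a b C \<in> blocks H"
proof -
  have "K = bridge_block G a b C"
    if K: "subgraph K H" "nonseparable K" "subgraph (bridge_block G a b C) K" for K
  proof -
    obtain e0 where e0: "e0 \<in> incident_edges G C" using incident_edges_nonempty[OF C] by blast
    have SQ: "verts (bridge_block G a b C) \<subseteq> verts K" "edges (bridge_block G a b C) \<subseteq> edges K"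
      "ends K = ends H"
      using K(3) subgraph_identifyD[OF K(1)] unfolding subgraph_def by auto
    have e0K: "e0 \<in> edges K" using e0 SQ by (auto simp: bridge_block_def)
    have "\<not> is_loop K e0" using card_ends_bridge_block[OF C e0] SQ(3) unfolding is_loop_def by simp
    then have lf: "\<forall>e\<in>edges K. \<not> is_loop K e" using nonseparable_loop_free[OF K(1,2) e0K] by blast
    obtain c where c: "c \<in> C" using comps_nonempty[OF C] by blast
    have "c \<in> verts K" using c SQ by (auto simp: bridge_block_def)
    then have "subgraph K (bridge_block G a b C)" using subgraph_bridge_block[OF C K(1,2) lf c]
      by blast
    then show ?thesis using K(3) subgraph_antisym by blast
  qed
  then show ?thesis unfolding blocks_def
    using bridge_block_subgraph[OF C] nonseparable_bridge_block[OF C] by blast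
qed

lemma ends_identify_joining: "e \<in> joining_edges G a b \<Longrightarrow> ends H e = {a}"
  unfolding joining_edges_def ends_identify by auto

lemma nonseparable_loop_block: "nonseparable (loop_block G a b e)"
proof -
  have "connected_graph (loop_block G a b e)" by (simp add: connected_graph_def loop_block_def)
  moreover have "\<not> cut_vertex (loop_block G a b e) v" for v
    by (simp add: cut_vertex_def loop_block_def)
  ultimately show ?thesis unfolding nonseparable_def by (simp add: loop_block_def)
qed

lemma loop_block_in_blocks: assumes e: "e \<in> joining_edges G a b"
  shows "loop_block G a b e \<in> blocks H"
proof -
  have eG: "e \<in> edges G" using e by (simp add: joining_edges_def)
  have sub: "subgraph (loop_block G a b e) H"
    unfolding subgraph_def using ends_identify_joining[OF e] av ab eG
      by (simp add: loop_block_def identify_def)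
  have "K = loop_block G a b e"
    if K: "subgraph K H" "nonseparable K" "subgraph (loop_block G a b e) K" for K
  proof -
    have SQ: "a \<in> verts K" "e \<in> edges K" "ends K = ends H"
      using K(3) subgraph_identifyD[OF K(1)] unfolding subgraph_def by (auto simp: loop_block_def)
    have "is_loop K e" unfolding is_loop_def SQ(3) ends_identify_joining[OF e] by simp
    then have c: "card (verts K) = 1" "card (edges K) = 1" using K(2) SQ(2)
      unfolding nonseparable_def by blast+
    have "verts K = {a}" using c(1) SQ(1) by (metis card_1_singletonE singletonD)
    moreover have "edges K = {e}" using c(2) SQ(2) by (metis card_1_singletonE singletonD)
    ultimately show ?thesis using SQ(3) by (intro mgraph.equality) (simp_all add: loop_block_def)
  qed
  then show ?thesis unfolding blocks_def using sub nonseparable_loop_block by blast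
qed


lemma joining_edgeI:
  assumes e: "e \<in> edges G" and loop: "card (ends H e) = 1"
  shows "e \<in> joining_edges G a b"
proof -
  obtain p q where pq: "p \<noteq> q" "ends G e = {p,q}" using ends_doubleton[OF e] by blast
  have "ends H e = {merge p, merge q}" by (simp only: ends_identify pq(2) image_insert image_empty)
  then have "merge p = merge q" using loop by (cases "merge p = merge q") auto
  then have "{p,q} = {a,b}" using pq(1) by (auto split: if_splits)
  then show ?thesis using e pq by (simp add: joining_edges_def)
qed

lemma block_identify_with_loop:
  assumes B: "B \<in> blocks H" and e: "e \<in> edges B" "is_loop B e"
  shows "e \<in> joining_edges G a b \<and> B = loop_block G a b e"
proof -
  have S: "edges B \<subseteq> edges G" "ends B = ends H" "\<forall>e\<in>edges B. ends H e \<subseteq> verts B"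
    using B subgraph_identifyD unfolding blocks_def by auto
  have eE: "e \<in> joining_edges G a b"
    using e S(1,2) by (intro joining_edgeI) (auto simp: is_loop_def)
  have c: "card (verts B) = 1" "card (edges B) = 1" using B e unfolding blocks_def nonseparable_def
    by auto
  have "a \<in> verts B" using S(3) e ends_identify_joining[OF eE] by blast
  then have "verts B = {a}" using c(1) by (metis card_1_singletonE singletonD)
  moreover have "edges B = {e}" using c(2) e by (metis card_1_singletonE singletonD)
  ultimately have "B = loop_block G a b e" using S(2)
    by (intro mgraph.equality) (simp_all add: loop_block_def)
  then show ?thesis using eE by blast
qed

lemma block_identify_without_loop:
  assumes B: "B \<in> blocks H" and e: "e \<in> edges B" "\<not> is_loop B e"
  shows "\<exists>C\<in>comps. B = bridge_block G a b C"
proof -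
  have B': "subgraph B H" "nonseparable B"
    "\<And>K. subgraph K H \<Longrightarrow> nonseparable K \<Longrightarrow> subgraph B K \<Longrightarrow> K = B"
    using B unfolding blocks_def by blast+
  note S = subgraph_identifyD[OF B'(1)]
  have eG: "e \<in> edges G" using e S by blast
  have loop_free: "\<forall>e\<in>edges B. \<not> is_loop B e" using nonseparable_loop_free[OF B'(1,2) e] .
  have "card (ends H e) \<noteq> 1" using e(2) S(3) by (simp add: is_loop_def)
  then obtain y where y: "y \<in> ends H e" "y \<noteq> a" using nonloop_other_end[OF eG] by blast
  have yB: "y \<in> verts B" using y S(4) e by blast
  define C where "C = bridge_comp G a b y"
  have C: "C \<in> comps" using y yB S(1) by (auto simp: C_def bridge_comps_def)
  have "subgraph B (bridge_block G a b C)"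
    using subgraph_bridge_block[OF C B'(1,2) loop_free _ yB] by (simp add: C_def bridge_comp_self)
  then have "bridge_block G a b C = B"
    using B'(3)[OF bridge_block_subgraph[OF C] nonseparable_bridge_block[OF C]] by blast
  then show ?thesis using C by blast
qed

lemma edged_blocks_identify:
  "{B \<in> blocks H. edges B \<noteq> {}} =
    bridge_block G a b ` comps \<union> loop_block G a b ` joining_edges G a b"
  (is "?blocks = ?pieces")
proof
  show "?pieces \<subseteq> ?blocks"
    using bridge_block_in_blocks loop_block_in_blocks incident_edges_nonempty
    by (auto simp: bridge_block_def loop_block_def)
  show "?blocks \<subseteq> ?pieces"
    using block_identify_with_loop block_identify_without_loop by blast
qed

lemma finite_joining_edges: "finite (joining_edges G a b)" using finite_edges
  by (simp add: joining_edges_def)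

lemma nblocks_identify: "nblocks H = card comps + card (joining_edges G a b)"
proof -
  have i1: "inj_on (bridge_block G a b) comps"
  proof
    fix C C' assume h: "C \<in> comps" "C' \<in> comps" "bridge_block G a b C = bridge_block G a b C'"
    then have "insert a C = insert a C'" by (metis bridge_block_def mgraph.select_convs(1))
    then show "C = C'" using comps_avoid_ends h by (metis insert_ident)
  qed
  have i2: "inj_on (loop_block G a b) (joining_edges G a b)"
    by (rule inj_onI) (metis loop_block_def mgraph.select_convs(2) singleton_inject)
  have d: "bridge_block G a b ` comps \<inter> loop_block G a b ` joining_edges G a b = {}"
  proof (rule ccontr)
    assume "bridge_block G a b ` comps \<inter> loop_block G a b ` joining_edges G a b \<noteq> {}"
    then obtain C e where h: "C \<in> comps" "bridge_block G a b C = loop_block G a b e" by blast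
    then have "insert a C = {a}" by (metis bridge_block_def loop_block_def mgraph.select_convs(1))
    then show False using comps_nonempty[OF h(1)] comps_avoid_ends[OF h(1)] by blast
  qed
  have "nblocks H = card (bridge_block G a b ` comps \<union> loop_block G a b ` joining_edges G a b)"
    unfolding nblocks_def edged_blocks_identify ..
  also have "\<dots> = card (bridge_block G a b ` comps) + card (loop_block G a b ` joining_edges G a b)"
    using d finite_comps finite_joining_edges by (intro card_Un_disjoint) auto
  also have "\<dots> = card comps + card (joining_edges G a b)" using card_image i1 i2 by metis
  finally show ?thesis .
qed

section \<open>Unions of bridges\<close>

lemma bridge_union_simps:
  "verts (bridge_union G a b X F) = {a,b} \<union> \<Union>X"
  "edges (bridge_union G a b X F) = F \<union> \<Union>(incident_edges G ` X)"
  "ends (bridge_union G a b X F) = ends G" by (simp_all add: bridge_union_def)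

lemma bridge_union_subgraph: assumes "X \<subseteq> comps" "F \<subseteq> joining_edges G a b"
  shows "subgraph (bridge_union G a b X F) G \<and>
    subgraph (bridge_union G a b X F) (bridge_union G a b X F)"
proof -
  have "ends G e \<subseteq> {a,b} \<union> \<Union>X" if e: "e \<in> F \<union> \<Union>(incident_edges G ` X)" for e
  proof (cases "e \<in> F")
    case True then show ?thesis using assms by (auto simp: joining_edges_def)
  next
    case False
    then obtain C where "C \<in> X" "e \<in> incident_edges G C" using e by blast
    then show ?thesis using incident_edges_ends[of C e] assms by blast
  qed
  moreover have "{a,b} \<union> \<Union>X \<subseteq> verts G" using av bv assms(1) comps_subset_rest by blast
  moreover have "F \<union> \<Union>(incident_edges G ` X) \<subseteq> edges G" using assms(2)
    by (auto simp: incident_edges_def joining_edges_def)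
  ultimately show ?thesis unfolding subgraph_def bridge_union_simps by blast
qed

lemma bridge_union_reach:
  assumes X: "X \<subseteq> comps" and C: "C \<in> X" and x: "x \<in> C" and W: "W \<subseteq> {v}" "x \<notin> W"
  shows "\<exists>s \<in> {a,b} - W. (x,s) \<in> (edge_rel_on G (edges (bridge_union G a b X F)) (-W))\<^sup>*"
proof -
  define w where "w = (if W = {} then a else v)"
  have Ww: "W \<subseteq> {w}" using W by (auto simp: w_def)
  have "w \<noteq> x" using W x comps_avoid_ends C X by (auto simp: w_def)
  from comps_reach_attachment[OF subsetD[OF X C] x this] obtain s where s: "s \<in> {a,b}" "s \<noteq> w"
    "(x,s) \<in> (edge_rel_on G (incident_edges G C) (insert a (insert b C) - {w}))\<^sup>*" by blast
  have "incident_edges G C \<subseteq> edges (bridge_union G a b X F)" using C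
    by (auto simp: bridge_union_simps)
  moreover have "insert a (insert b C) - {w} \<subseteq> -W" using Ww by blast
  ultimately have "(x,s) \<in> (edge_rel_on G (edges (bridge_union G a b X F)) (-W))\<^sup>*"
    by (rule rtrancl_edge_rel_on_mono[OF s(3)])
  then show ?thesis using s Ww by blast
qed

text \<open>With at least two pieces, one of them avoids v and links a to b.\<close>
lemma bridge_union_ends_connected:
  assumes X: "X \<subseteq> comps" and F: "F \<subseteq> joining_edges G a b" and pieces: "2 \<le> card X + card F"
    and W: "W \<subseteq> {v}" "a \<notin> W" "b \<notin> W"
  shows "(a,b) \<in> (edge_rel_on G (edges (bridge_union G a b X F)) (-W))\<^sup>*"
proof (cases "F = {}")
  case False
  then obtain f where f: "f \<in> F" by blast
  have ends: "ends G f = {a,b}" using f F by (auto simp: joining_edges_def)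
  have "f \<in> edges (bridge_union G a b X F)" using f by (simp add: bridge_union_simps)
  moreover have "ends G f \<subseteq> -W" using ends W(2,3) by auto
  ultimately have "(a,b) \<in> edge_rel_on G (edges (bridge_union G a b X F)) (-W)"
    unfolding edge_rel_on_def using ends by blast
  then show ?thesis by (rule r_into_rtrancl)
next
  case True
  have "finite X" using X finite_comps finite_subset by blast
  moreover have "2 \<le> card X" using pieces by (simp add: True)
  ultimately obtain C1 C2 where C12: "C1 \<in> X" "C2 \<in> X" "C1 \<noteq> C2"
    by (metis One_nat_def card.empty card_le_Suc0_iff_eq not_less_eq_eq numeral_2_eq_2 zero_le)
  then have "v \<notin> C1 \<or> v \<notin> C2" using comps_disjoint[of C1 C2 v] X by blast
  then obtain C where "C \<in> X" "v \<notin> C" using C12 by blast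
  then have C: "C \<in> X" "C \<inter> W = {}" using W(1) by auto
  then obtain x where x: "x \<in> C" using comps_nonempty[of C] X by blast
  have to_end: "(x,s) \<in> (edge_rel_on G (edges (bridge_union G a b X F)) (-W))\<^sup>*" if s: "s \<in> {a,b}"
    for s
  proof -
    define u where "u = (if s = a then b else a)"
    have "u \<noteq> x" using comps_avoid_ends C X x by (auto simp: u_def)
    from comps_reach_attachment[OF subsetD[OF X C(1)] x this] obtain t where t: "t \<in> {a,b}" "t \<noteq> u"
      "(x,t) \<in> (edge_rel_on G (incident_edges G C) (insert a (insert b C) - {u}))\<^sup>*" by blast
    have "t = s" using t s ab by (auto simp: u_def)
    have "incident_edges G C \<subseteq> edges (bridge_union G a b X F)" using C
      by (auto simp: bridge_union_simps)
    moreover have "insert a (insert b C) - {u} \<subseteq> -W" using C W by blast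
    ultimately have "(x,t) \<in> (edge_rel_on G (edges (bridge_union G a b X F)) (-W))\<^sup>*"
      by (rule rtrancl_edge_rel_on_mono[OF t(3)])
    then show ?thesis using \<open>t = s\<close> by simp
  qed
  have "(a,x) \<in> (edge_rel_on G (edges (bridge_union G a b X F)) (-W))\<^sup>*"
    using rtrancl_edge_rel_on_sym[OF to_end[of a]] by simp
  then show ?thesis using rtrancl_trans[OF _ to_end[of b]] by simp
qed

lemma bridge_union_connected_avoiding:
  assumes X: "X \<subseteq> comps" and F: "F \<subseteq> joining_edges G a b" and pieces: "2 \<le> card X + card F"
    and W: "W \<subseteq> {v}"
    and xy: "x \<in> verts (bridge_union G a b X F) - W" "y \<in> verts (bridge_union G a b X F) - W"
  shows "(x,y) \<in> (edge_rel_on G (edges (bridge_union G a b X F)) (-W))\<^sup>*"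
proof -
  let ?r = "edge_rel_on G (edges (bridge_union G a b X F)) (-W)"
  define t where "t = (if a \<in> W then b else a)"
  have end_to_t: "(s,t) \<in> ?r\<^sup>*" if "s \<in> {a,b} - W" for s
  proof (cases "s = t")
    case False
    then have "a \<notin> W" "b \<notin> W" "s = b" "t = a" using that W ab by (auto simp: t_def split: if_splits)
    then show ?thesis using rtrancl_edge_rel_on_sym[OF bridge_union_ends_connected[OF X F pieces W]]
      by simp
  qed simp
  have "(z,t) \<in> ?r\<^sup>*" if z: "z \<in> verts (bridge_union G a b X F) - W" for z
  proof -
    consider "z \<in> {a,b}" | C where "C \<in> X" "z \<in> C" using z unfolding bridge_union_simps by blast
    then show ?thesis
    proof cases
      case 1 then show ?thesis using end_to_t z by blast
    next
      case 2
      from bridge_union_reach[OF X 2 W] z obtain s where s: "s \<in> {a,b} - W" "(z,s) \<in> ?r\<^sup>*" by blast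
      show ?thesis by (rule rtrancl_trans[OF s(2) end_to_t[OF s(1)]])
    qed
  qed
  then show ?thesis by (rule rtrancl_edge_rel_on_hub[OF _ xy])
qed

lemma edge_rel_on_bridge_union: "edge_rel_on (bridge_union G a b X F) E A = edge_rel_on G E A"
  by (simp add: bridge_union_def edge_rel_on_def)

lemma nonseparable_bridge_union:
  assumes X: "X \<subseteq> comps" and F: "F \<subseteq> joining_edges G a b" and pieces: "2 \<le> card X + card F"
  shows "nonseparable (bridge_union G a b X F)"
proof -
  have "(x,y) \<in> (edge_rel_on G (edges (bridge_union G a b X F)) UNIV)\<^sup>*"
    if "x \<in> verts (bridge_union G a b X F)" "y \<in> verts (bridge_union G a b X F)" for x y
    using bridge_union_connected_avoiding[OF X F pieces, of "{}" a x y] that by simp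
  then have con: "connected_graph (bridge_union G a b X F)"
    unfolding connected_graph_def edge_rel_eq_edge_rel_on edge_rel_on_bridge_union
    by (simp add: bridge_union_simps)
  have ncut: "\<not> cut_vertex (bridge_union G a b X F) v" for v
  proof (rule not_cut_vertexI, unfold edge_rel_on_bridge_union)
    fix x y
    assume "x \<in> verts (bridge_union G a b X F) - {v}" "y \<in> verts (bridge_union G a b X F) - {v}"
    then show "(x,y) \<in> (edge_rel_on G (edges (bridge_union G a b X F)) (-{v}))\<^sup>*"
      by (rule bridge_union_connected_avoiding[OF X F pieces subset_refl])
  qed
  have "\<forall>e\<in>edges (bridge_union G a b X F). \<not> is_loop (bridge_union G a b X F) e"
  proof
    fix e assume "e \<in> edges (bridge_union G a b X F)"
    then have "e \<in> edges G" using bridge_union_subgraph[OF X F] unfolding subgraph_def by blast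
    then show "\<not> is_loop (bridge_union G a b X F) e" using card_ends
      by (simp add: is_loop_def bridge_union_simps)
  qed
  then show ?thesis unfolding nonseparable_def using con ncut by blast
qed

lemma nblocks_bridge_block: "C \<in> comps \<Longrightarrow> nblocks (bridge_block G a b C) = 1"
  using bridge_block_subgraph incident_edges_nonempty nonseparable_bridge_block
  by (intro nblocks_nonseparable) (auto simp: subgraph_def bridge_block_def)

lemma nblocks_loop_block: "e \<in> joining_edges G a b \<Longrightarrow> nblocks (loop_block G a b e) = 1"
  by (intro nblocks_nonseparable nonseparable_loop_block)
    (simp_all add: subgraph_def loop_block_def ends_identify_joining)

lemma card_edges_bridge_union:
  assumes X: "X \<subseteq> comps" and F: "F \<subseteq> joining_edges G a b" and pieces: "X \<noteq> {} \<or> 2 \<le> card F"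
  shows "2 \<le> card (edges (bridge_union G a b X F))"
proof -
  have fin: "finite (edges (bridge_union G a b X F))"
    using bridge_union_subgraph[OF X F] finite_edges finite_subset unfolding subgraph_def by metis
  show ?thesis
  proof (cases "X = {}")
    case True
    have "F \<subseteq> edges (bridge_union G a b X F)" by (simp add: bridge_union_simps)
    then have "card F \<le> card (edges (bridge_union G a b X F))" by (rule card_mono[OF fin])
    then show ?thesis using pieces True by simp
  next
    case False
    then obtain C where C: "C \<in> X" by blast
    have "incident_edges G C \<subseteq> edges (bridge_union G a b X F)" using C
      by (auto simp: bridge_union_simps)
    then show ?thesis using card_mono[OF fin] card_incident_edges C X by (meson le_trans subsetD)
  qed
qed

lemma nblocks_bridge_union:
  assumes X: "X \<subseteq> comps" and F: "F \<subseteq> joining_edges G a b" and pieces: "2 \<le> card X + card F"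
  shows "nblocks (bridge_union G a b X F) = 1"
proof (rule nblocks_nonseparable)
  show "nonseparable (bridge_union G a b X F)" by (rule nonseparable_bridge_union[OF X F pieces])
  show "subgraph (bridge_union G a b X F) (bridge_union G a b X F)"
    using bridge_union_subgraph[OF X F] by blast
  have "X \<noteq> {} \<or> 2 \<le> card F" using pieces by auto
  then show "edges (bridge_union G a b X F) \<noteq> {}" using card_edges_bridge_union[OF X F] by fastforce
qed

lemma identify_bridge_union_singleton:
  "C \<in> comps \<Longrightarrow> identify (bridge_union G a b {C} {}) a b = bridge_block G a b C"
  using comps_avoid_ends ab
    by (intro mgraph.equality) (auto simp: identify_def bridge_block_def bridge_union_def)

lemma bridge_union_complement:
  assumes X: "X \<subseteq> comps" and F: "F \<subseteq> joining_edges G a b"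
  defines "G1 \<equiv> bridge_union G a b X F"
    and "G2 \<equiv> bridge_union G a b (comps - X) (joining_edges G a b - F)"
  shows "verts G1 \<inter> verts G2 = {a,b}" "verts G1 \<union> verts G2 = verts G"
    "edges G1 \<inter> edges G2 = {}" "edges G1 \<union> edges G2 = edges G"
proof -
  have "\<Union>X \<inter> \<Union>(comps - X) = {}" using comps_disjoint X by blast
  then show "verts G1 \<inter> verts G2 = {a,b}" unfolding G1_def G2_def bridge_union_simps by blast
  show "verts G1 \<union> verts G2 = verts G"
    unfolding G1_def G2_def bridge_union_simps verts_decomp using X by blast
  have "incident_edges G C \<inter> incident_edges G C' = {}" if "C \<in> X" "C' \<in> comps - X" for C C'
    using incident_edges_disjoint that X by blast
  moreover have "incident_edges G C \<inter> joining_edges G a b = {}" if "C \<in> comps" for C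
    using incident_joining_disjoint that by blast
  ultimately show "edges G1 \<inter> edges G2 = {}"
    unfolding G1_def G2_def bridge_union_simps using X F by blast
  show "edges G1 \<union> edges G2 = edges G"
    unfolding G1_def G2_def bridge_union_simps edges_decomp using X F by blast
qed

lemma nblocks_identify_delete_joining:
  assumes e: "e \<in> joining_edges G a b" and N: "card comps + card (joining_edges G a b) = 2"
  shows "nblocks (identify (delete_edge G e) a b) = 1"
proof -
  consider "card comps = 1" "card (joining_edges G a b) = 1"
    | "card comps = 0" "card (joining_edges G a b) = 2"
    | "card comps = 2" "card (joining_edges G a b) = 0" using N by linarith
  then show ?thesis
  proof cases
    case 1
    then obtain C where C: "comps = {C}" by (meson card_1_singletonE)
    have E: "joining_edges G a b = {e}" using 1(2) e by (metis card_1_singletonE singletonD)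
    have Cc: "C \<in> comps" using C by simp
    have "e \<notin> incident_edges G C" using incident_joining_disjoint[OF Cc] e by blast
    then have "edges G - {e} = incident_edges G C" using edges_decomp C E by auto
    moreover have "verts G - {b} = insert a C" using verts_decomp C ab comps_avoid_ends[OF Cc]
      by auto
    ultimately have "identify (delete_edge G e) a b = bridge_block G a b C"
      by (intro mgraph.equality) (simp_all add: identify_def bridge_block_def delete_edge_def)
    then show ?thesis using nblocks_bridge_block[OF Cc] by simp
  next
    case 2
    then have "comps = {}" using finite_comps by simp
    obtain e' where e': "joining_edges G a b = {e,e'}" "e' \<noteq> e"
      using 2(2) e unfolding card_2_iff by (metis insert_commute insertE singletonD)
    have "edges G - {e} = {e'}" using edges_decomp \<open>comps = {}\<close> e' by auto
    moreover have "verts G - {b} = {a}" using verts_decomp \<open>comps = {}\<close> ab by auto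
    ultimately have "identify (delete_edge G e) a b = loop_block G a b e'"
      by (intro mgraph.equality) (simp_all add: identify_def loop_block_def delete_edge_def)
    then show ?thesis using nblocks_loop_block e' by simp
  next
    case 3
    then show ?thesis using e finite_joining_edges by simp
  qed
qed

end

section \<open>The number of blocks of G/ab under \<Phi>\<close>

text \<open>The separations quantified over in condition (c') of \<Phi>.\<close>
definition two_separation ::
    "('v,'e) mgraph \<Rightarrow> ('v,'e) mgraph \<Rightarrow> ('v,'e) mgraph \<Rightarrow> 'v \<Rightarrow> 'v \<Rightarrow> bool" where
  "two_separation G G1 G2 u1 u2 \<longleftrightarrow> subgraph G1 G \<and> subgraph G2 G \<and>
     card (edges G1) \<ge> 2 \<and> card (edges G2) \<ge> 2 \<and> u1 \<noteq> u2 \<and>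
     verts G1 \<inter> verts G2 = {u1, u2} \<and> verts G1 \<union> verts G2 = verts G \<and>
     edges G1 \<inter> edges G2 = {} \<and> edges G1 \<union> edges G2 = edges G"

lemma Phi_two_separation_parity:
  assumes "Phi G" and "two_separation G G1 G2 u1 u2"
  shows "(even (int (nblocks (identify G1 u1 u2))) \<longleftrightarrow> even (int (nblocks G1) - 1)) \<and>
    (even (int (nblocks G1) - 1) \<longleftrightarrow> even (int (nblocks G2)))"
  using assms unfolding Phi_def two_separation_def by blast

context nonsep_pair
begin

lemma two_separation_bridge_union:
  assumes X: "X \<subseteq> comps" and F: "F \<subseteq> joining_edges G a b"
    and pieces1: "X \<noteq> {} \<or> 2 \<le> card F"
    and pieces2: "comps - X \<noteq> {} \<or> 2 \<le> card (joining_edges G a b - F)"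
  shows "two_separation G (bridge_union G a b X F)
    (bridge_union G a b (comps - X) (joining_edges G a b - F)) a b"
  unfolding two_separation_def
  using bridge_union_subgraph[OF X F]
    bridge_union_subgraph[of "comps - X" "joining_edges G a b - F"]
    card_edges_bridge_union[OF X F pieces1] card_edges_bridge_union[OF _ _ pieces2]
    bridge_union_complement[OF X F] ab
  by auto

lemma pieces_ne_0: "card comps + card (joining_edges G a b) \<noteq> 0"
proof
  assume "card comps + card (joining_edges G a b) = 0"
  then have "edges G = {}" using edges_decomp finite_comps finite_joining_edges by auto
  then have "edge_rel_on G (edges G) UNIV = {}" by (simp add: edge_rel_on_def)
  moreover have "(a,b) \<in> (edge_rel_on G (edges G) UNIV)\<^sup>*" using connected_rtrancl av bv by blast
  ultimately show False using ab by simp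
qed

lemma nonsep_pair_swap: "nonsep_pair G b a"
  using wf ns av bv ab by unfold_locales auto

text \<open>contract chooses the order of the two ends of e by SOME, so both orders are covered.\<close>
lemma nblocks_contract_joining:
  assumes e: "e \<in> joining_edges G a b" and N: "card comps + card (joining_edges G a b) = 2"
  shows "nblocks (contract G e) = 1"
proof -
  interpret swapped: nonsep_pair G b a by (rule nonsep_pair_swap)
  have eG: "e \<in> edges G" and ends_e: "ends G e = {a,b}" using e by (simp_all add: joining_edges_def)
  define x where "x = (SOME x. x \<in> ends G e)"
  define y where "y = (SOME y. y \<in> ends G e \<and> y \<noteq> x)"
  have x: "x \<in> {a,b}" unfolding x_def ends_e by (rule someI[of _ a]) simp
  have "\<exists>y. y \<in> ends G e \<and> y \<noteq> x" using x ab ends_e by auto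
  then have y: "y \<in> ends G e \<and> y \<noteq> x" unfolding y_def by (rule someI_ex)
  have "\<not> is_loop G e" using card_ends[OF eG] by (simp add: is_loop_def)
  then have contract: "contract G e = identify (delete_edge G e) x y"
    unfolding contract_def by (simp add: x_def y_def Let_def)
  have "nblocks (identify (delete_edge G e) a b) = 1" "nblocks (identify (delete_edge G e) b a) = 1"
    using nblocks_identify_delete_joining[OF e N] swapped.nblocks_identify_delete_joining e N
    by (simp_all add: bridge_comps_swap joining_edges_swap)
  moreover have "(x = a \<and> y = b) \<or> (x = b \<and> y = a)" using x y ends_e by auto
  ultimately show ?thesis using contract by auto
qed

text \<open>Identifying a and b in the left side leaves the single block C + a, so (c') forces
  the two sides to have opposite parities.\<close>
lemma Phi_two_bridges_parity:
  assumes Phi: "Phi G" and C: "C \<in> comps" and other: "comps - {C} = {C'}"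
    and no_joining: "joining_edges G a b = {}"
  shows "even (nblocks (bridge_union G a b {C} {})) \<and> odd (nblocks (bridge_union G a b {C'} {}))"
proof -
  have "two_separation G (bridge_union G a b {C} {}) (bridge_union G a b {C'} {}) a b"
    using two_separation_bridge_union[of "{C}" "{}"] C other no_joining by simp
  note parity = Phi_two_separation_parity[OF Phi this]
  have "nblocks (identify (bridge_union G a b {C} {}) a b) = 1"
    using C by (simp add: identify_bridge_union_singleton nblocks_bridge_block)
  then show ?thesis using parity by auto
qed

lemma Phi_pieces_ne_2:
  assumes Phi: "Phi G"
  shows "card comps + card (joining_edges G a b) \<noteq> 2"
proof
  assume N: "card comps + card (joining_edges G a b) = 2"
  show False
  proof (cases "joining_edges G a b = {}")
    case False
    then obtain e where e: "e \<in> joining_edges G a b" by blast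
    then have "e \<in> edges G" by (simp add: joining_edges_def)
    then have "even (nblocks (contract G e))" using Phi unfolding Phi_def by blast
    then show False using nblocks_contract_joining[OF e N] by simp
  next
    case True
    then have "card comps = 2" using N by simp
    then obtain C1 C2 where C: "comps = {C1,C2}" "C1 \<noteq> C2" unfolding card_2_iff by blast
    then have "C1 \<in> comps" "comps - {C1} = {C2}" "C2 \<in> comps" "comps - {C2} = {C1}" by auto
    then show False
      using Phi_two_bridges_parity[OF Phi _ _ True, of C1 C2]
        Phi_two_bridges_parity[OF Phi _ _ True, of C2 C1]
      by simp
  qed
qed

lemma Phi_pieces_le_3:
  assumes Phi: "Phi G"
  shows "card comps + card (joining_edges G a b) \<le> 3"
proof (rule ccontr)
  let ?J = "joining_edges G a b"
  assume "\<not> card comps + card ?J \<le> 3"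
  define k where "k = min 2 (card comps)"
  have "k \<le> card comps" "2 - k \<le> card ?J" using \<open>\<not> _ \<le> 3\<close> by (auto simp: k_def)
  obtain X where X: "X \<subseteq> comps" "card X = k" by (rule obtain_subset_with_card_n[OF \<open>k \<le> _\<close>])
  obtain F where F: "F \<subseteq> ?J" "card F = 2 - k" by (rule obtain_subset_with_card_n[OF \<open>2 - k \<le> _\<close>])
  have "card (comps - X) = card comps - k" "card (?J - F) = card ?J - (2 - k)"
    using X F finite_comps finite_joining_edges by (simp_all add: card_Diff_subset finite_subset)
  then have pieces1: "2 \<le> card X + card F" and pieces2: "2 \<le> card (comps - X) + card (?J - F)"
    using X F \<open>\<not> _ \<le> 3\<close> by (auto simp: k_def)
  have "X \<noteq> {} \<or> 2 \<le> card F" "comps - X \<noteq> {} \<or> 2 \<le> card (?J - F)"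
    using pieces1 pieces2 by (metis add_0 card.empty)+
  then have "two_separation G
      (bridge_union G a b X F) (bridge_union G a b (comps - X) (?J - F)) a b"
    by (rule two_separation_bridge_union[OF X(1) F(1)])
  note parity = Phi_two_separation_parity[OF Phi this]
  have "nblocks (bridge_union G a b X F) = 1" by (rule nblocks_bridge_union[OF X(1) F(1) pieces1])
  moreover have "nblocks (bridge_union G a b (comps - X) (?J - F)) = 1"
    by (rule nblocks_bridge_union[OF _ _ pieces2]) auto
  ultimately show False using parity by simp
qed

end

theorem lemma4p3:
  fixes G :: "('v, 'e) mgraph" and u1 u2 :: 'v
  assumes "Phi G" and "u1 \<in> verts G" and "u2 \<in> verts G" and "u1 \<noteq> u2"
  shows "nblocks (identify G u1 u2) \<in> {1, 3}"
proof -
  interpret nonsep_pair G u1 u2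
    using assms by unfold_locales (auto simp: Phi_def)
  have "nblocks (identify G u1 u2) = card comps + card (joining_edges G u1 u2)"
    by (rule nblocks_identify)
  then show ?thesis
    using pieces_ne_0 Phi_pieces_ne_2[OF assms(1)] Phi_pieces_le_3[OF assms(1)] by auto
qed

end
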